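(* A finite graph has cutwidth at most $2$ if and only if it is (isomorphic to) a subgraph of some chain of cycles.
   Context: All graphs are finite and simple. A graph with $n$ vertices has cutwidth at most $2$ if its vertices can be numbered $1,\ldots,n$ (bijectively) so that for every $i=1,\ldots,n-1$ there are at most two edges $(u,v)$ with $u\le i<v$. A chain of $n$ cycles is a union of $n$ cycles $Z_1,\ldots,Z_n$ together with vertices $a_j,b_j\in Z_j$ ($j=1,\ldots,n$) such that $Z_i\cap Z_j=\emptyset$ whenever $|i-j|>1$, and $Z_{j-1}\cap Z_j=\{b_{j-1}\}=\{a_j\}$ for every $j=2,\ldots,n$. A chain of cycles is a chain of $n$ cycles for some $n\ge 1$. *)

theory Defs
  imports Main
begin

definition simple_graph :: "'a set \<Rightarrow> 'a set set \<Rightarrow> bool" where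
  "simple_graph V E \<longleftrightarrow> finite V \<and> (\<forall>e\<in>E. e \<subseteq> V \<and> card e = 2)"

definition cutwidth_at_most_2 :: "'a set \<Rightarrow> 'a set set \<Rightarrow> bool" where
  "cutwidth_at_most_2 V E \<longleftrightarrow>
     (\<exists>f. bij_betw f V {1..card V} \<and>
        (\<forall>i\<in>{1..<card V}.
           card {e\<in>E. \<exists>u v. e = {u, v} \<and> f u \<le> i \<and> i < f v} \<le> 2))"

definition is_cycle :: "'a set \<Rightarrow> 'a set set \<Rightarrow> bool" where
  "is_cycle V E \<longleftrightarrow>
     (\<exists>vs. 3 \<le> length vs \<and> distinct vs \<and> V = set vs \<and>
        E = {{vs ! i, vs ! ((i + 1) mod length vs)} | i. i < length vs})"

definition chain_of_cycles :: "'a set \<Rightarrow> 'a set set \<Rightarrow> bool" where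
  "chain_of_cycles V E \<longleftrightarrow>
     (\<exists>(n::nat) (ZV :: nat \<Rightarrow> 'a set) (ZE :: nat \<Rightarrow> 'a set set) a b.
        1 \<le> n \<and>
        (\<forall>j\<in>{1..n}. is_cycle (ZV j) (ZE j) \<and> a j \<in> ZV j \<and> b j \<in> ZV j) \<and>
        (\<forall>i\<in>{1..n}. \<forall>j\<in>{1..n}. (i + 1 < j \<or> j + 1 < i) \<longrightarrow> ZV i \<inter> ZV j = {}) \<and>
        (\<forall>j\<in>{2..n}. ZV (j - 1) \<inter> ZV j = {b (j - 1)} \<and> ZV (j - 1) \<inter> ZV j = {a j}) \<and>
        V = (\<Union>j\<in>{1..n}. ZV j) \<and> E = (\<Union>j\<in>{1..n}. ZE j))"

definition iso_to_subgraph :: "'a set \<Rightarrow> 'a set set \<Rightarrow> 'b set \<Rightarrow> 'b set set \<Rightarrow> bool" where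
  "iso_to_subgraph V E W F \<longleftrightarrow>
     (\<exists>f. inj_on f V \<and> f ` V \<subseteq> W \<and> (\<forall>e\<in>E. f ` e \<in> F))"

end

theory Submission
  imports Defs
begin

text \<open>
  A numbering witnessing cutwidth at most 2 is the same as an injective layout of the vertices
  in \<nat> in which every cut is crossed by at most two edges. Such layouts pull back along subgraph
  embeddings, and a chain of cycles has one: each cycle is laid out by walking from its link a j to
  its link b j along one arc and then back along the other, and consecutive cycles are concatenated
  at their common vertex.

  Conversely, take a layout and move the isolated vertices past all edges. A vertex that has an
  edge of its own is then passed over by at most one edge: two passing edges and its own edge
  would all cross the cut next to it. Colour the edges with two lanes so that edges crossing
  a common cut get different lanes. The vertices passed over by no edge are the junctions; between
  two consecutive junctions put a cycle through both, carrying every vertex in between on the side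
  opposite to the lane of the edge passing over it. An edge joins two vertices that are consecutive
  on the side of its own lane, so the graph embeds into the chain of these cycles.
\<close>

section \<open>Linear layouts\<close>

definition crossing_edges :: "('a \<Rightarrow> nat) \<Rightarrow> 'a set set \<Rightarrow> nat \<Rightarrow> 'a set set" where
  "crossing_edges h E t = {e\<in>E. \<exists>u v. e = {u, v} \<and> h u \<le> t \<and> t < h v}"

definition width2_layout :: "('a \<Rightarrow> nat) \<Rightarrow> 'a set \<Rightarrow> 'a set set \<Rightarrow> bool" where
  "width2_layout h V E \<longleftrightarrow> inj_on h V \<and> finite E \<and> (\<forall>t. card (crossing_edges h E t) \<le> 2)"

lemma finite_crossing_edges: "finite E \<Longrightarrow> finite (crossing_edges h E t)"
  by (simp add: crossing_edges_def)

lemma card_crossing_edges_le: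
  assumes "width2_layout h V E" and "S \<subseteq> crossing_edges h E t"
  shows "card S \<le> 2"
proof -
  have "card S \<le> card (crossing_edges h E t)"
    using assms by (intro card_mono finite_crossing_edges) (auto simp: width2_layout_def)
  then show ?thesis using assms(1) by (auto simp: width2_layout_def intro: order_trans)
qed

lemma crossing_edges_Un:
  "crossing_edges h (E1 \<union> E2) t = crossing_edges h E1 t \<union> crossing_edges h E2 t"
  by (auto simp: crossing_edges_def)

lemma crossing_edges_cong:
  assumes "\<forall>e\<in>E. e \<subseteq> V" and "\<And>v. v \<in> V \<Longrightarrow> h v = g v"
  shows "crossing_edges h E t = crossing_edges g E t"
  unfolding crossing_edges_def
proof (rule Collect_cong, rule conj_cong[OF refl])
  fix e assume "e \<in> E"
  then have "h u = g u \<and> h v = g v" if "e = {u, v}" for u v using assms that by blast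
  then show "(\<exists>u v. e = {u, v} \<and> h u \<le> t \<and> t < h v)
      \<longleftrightarrow> (\<exists>u v. e = {u, v} \<and> g u \<le> t \<and> t < g v)"
    by metis
qed

lemma crossing_edges_shift:
  "crossing_edges (\<lambda>v. c + g v) E t = (if t < c then {} else crossing_edges g E (t - c))"
proof (cases "t < c")
  case False
  then have "c + a \<le> t \<longleftrightarrow> a \<le> t - c" "t < c + a \<longleftrightarrow> t - c < a" for a by auto
  then show ?thesis using False by (simp add: crossing_edges_def)
qed (auto simp: crossing_edges_def)

lemma crossing_edges_beyond:
  assumes "\<forall>e\<in>E. e \<subseteq> V" and "\<And>v. v \<in> V \<Longrightarrow> h v \<le> s" and "s \<le> t"
  shows "crossing_edges h E t = {}"
proof -
  have False if "{u, v} \<in> E" "t < h v" for u v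
    using assms that by force
  then show ?thesis unfolding crossing_edges_def by blast
qed

lemma order_preserving_numbering:
  fixes h :: "'a \<Rightarrow> 'b::linorder"
  assumes fin: "finite V" and inj: "inj_on h V"
  obtains r where "bij_betw r V {1..card V}"
    and "\<And>a b. a \<in> V \<Longrightarrow> b \<in> V \<Longrightarrow> r a < r b \<longleftrightarrow> h a < h b"
proof
  define r where "r v = Suc (card {w\<in>V. h w < h v})" for v
  have mono: "r a < r b" if "a \<in> V" "h a < h b" for a b
  proof -
    have "{w\<in>V. h w < h a} \<subset> {w\<in>V. h w < h b}" using that by auto
    then show ?thesis unfolding r_def using fin by (simp add: psubset_card_mono)
  qed
  show iff: "r a < r b \<longleftrightarrow> h a < h b" if "a \<in> V" "b \<in> V" for a b
    using mono[of a b] mono[of b a] inj_onD[OF inj _ that] that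
    by (metis less_asym' linorder_neqE)
  have "inj_on r V"
    by (rule inj_onI) (metis iff inj_onD[OF inj] less_irrefl linorder_neqE)
  moreover have "r ` V \<subseteq> {1..card V}"
    unfolding r_def using fin by (auto intro!: psubset_card_mono simp: Suc_le_eq)
  ultimately show "bij_betw r V {1..card V}"
    by (simp add: bij_betw_def card_image card_subset_eq)
qed

lemma cutwidth_at_most_2_iff_width2_layout:
  assumes fin: "finite V" and sub: "\<forall>e\<in>E. e \<subseteq> V"
  shows "cutwidth_at_most_2 V E \<longleftrightarrow> (\<exists>h. width2_layout h V E)"
proof
  have finE: "finite E" using fin sub by (meson Pow_iff finite_Pow_iff finite_subset subsetI)
  assume "cutwidth_at_most_2 V E"
  then obtain f where f: "bij_betw f V {1..card V}"
    and cut: "\<forall>i\<in>{1..<card V}. card (crossing_edges f E i) \<le> 2"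
    by (auto simp: cutwidth_at_most_2_def crossing_edges_def)
  have "crossing_edges f E t = {}" if "t \<notin> {1..<card V}" for t
    using that sub bij_betwE[OF f] by (fastforce simp: crossing_edges_def)
  then have "card (crossing_edges f E t) \<le> 2" for t
    using cut by (cases "t \<in> {1..<card V}") auto
  then show "\<exists>h. width2_layout h V E"
    using f finE by (auto simp: width2_layout_def bij_betw_def)
next
  assume "\<exists>h. width2_layout h V E"
  then obtain h where h: "width2_layout h V E" ..
  then obtain r where r: "bij_betw r V {1..card V}"
    and iff: "\<And>a b. a \<in> V \<Longrightarrow> b \<in> V \<Longrightarrow> r a < r b \<longleftrightarrow> h a < h b"
    using fin order_preserving_numbering[of V h] by (auto simp: width2_layout_def)
  have "card (crossing_edges r E i) \<le> 2" if "i \<in> {1..<card V}" for i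
  proof -
    have "i \<in> r ` V" using that bij_betw_imp_surj_on[OF r] by auto
    then obtain u' where u': "u' \<in> V" "r u' = i" by auto
    have le: "r a \<le> r b \<longleftrightarrow> h a \<le> h b" if "a \<in> V" "b \<in> V" for a b
      using iff[OF that(2,1)] by (simp add: not_less[symmetric])
    have "crossing_edges r E i \<subseteq> crossing_edges h E (h u')"
      using sub u' le iff by (fastforce simp: crossing_edges_def)
    then show ?thesis by (rule card_crossing_edges_le[OF h])
  qed
  then show "cutwidth_at_most_2 V E"
    using r by (auto simp: cutwidth_at_most_2_def crossing_edges_def)
qed

lemma width2_layout_pullback:
  assumes H: "width2_layout H W F" and iso: "iso_to_subgraph V E W F"
    and fin: "finite V" and sub: "\<forall>e\<in>E. e \<subseteq> V"
  shows "\<exists>h. width2_layout h V E"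
proof -
  obtain g where g: "inj_on g V" "g ` V \<subseteq> W" "\<forall>e\<in>E. g ` e \<in> F"
    using iso by (auto simp: iso_to_subgraph_def)
  have "card (crossing_edges (H \<circ> g) E t) \<le> 2" for t
  proof -
    have "inj_on ((`) g) (crossing_edges (H \<circ> g) E t)"
    proof (rule inj_onI)
      fix a b assume "a \<in> crossing_edges (H \<circ> g) E t" "b \<in> crossing_edges (H \<circ> g) E t"
        "g ` a = g ` b"
      then show "a = b" using inj_on_image_eq_iff[OF g(1)] sub by (auto simp: crossing_edges_def)
    qed
    moreover have "(`) g ` crossing_edges (H \<circ> g) E t \<subseteq> crossing_edges H F t"
      using g(3) by (auto simp: crossing_edges_def)
    ultimately have "card (crossing_edges (H \<circ> g) E t) \<le> card (crossing_edges H F t)"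
      using H by (auto intro!: card_inj_on_le finite_crossing_edges simp: width2_layout_def)
    then show ?thesis using H by (auto simp: width2_layout_def intro: order_trans)
  qed
  moreover have "inj_on (H \<circ> g) V"
    using H g by (auto simp: width2_layout_def intro: comp_inj_on inj_on_subset)
  moreover have "finite E" using fin sub by (meson Pow_iff finite_Pow_iff finite_subset subsetI)
  ultimately show ?thesis by (auto simp: width2_layout_def)
qed

section \<open>Edge sets of paths and cycles\<close>

fun path_edges :: "'a list \<Rightarrow> 'a set set" where
  "path_edges (x # y # zs) = insert {x, y} (path_edges (y # zs))"
| "path_edges _ = {}"

definition cycle_edges :: "'a list \<Rightarrow> 'a set set" where
  "cycle_edges vs = path_edges (vs @ [hd vs])"

text \<open>Not a simp rule: path_edges (xs @ [y]) on the right is again an instance of the left.\<close>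
lemma path_edges_append:
  "path_edges (xs @ y # ys) = path_edges (xs @ [y]) \<union> path_edges (y # ys)"
  by (induction xs rule: path_edges.induct) auto

lemma path_edges_conv_nth:
  "path_edges xs = (\<lambda>i. {xs ! i, xs ! Suc i}) ` {..<length xs - 1}"
proof (induction xs rule: path_edges.induct)
  case (1 x y zs)
  have "{..<length (x # y # zs) - 1} = insert 0 (Suc ` {..<length (y # zs) - 1})"
    by (simp add: lessThan_Suc_eq_insert_0)
  then have "(\<lambda>i. {(x # y # zs) ! i, (x # y # zs) ! Suc i}) ` {..<length (x # y # zs) - 1}
    = insert {x, y} ((\<lambda>i. {(y # zs) ! i, (y # zs) ! Suc i}) ` {..<length (y # zs) - 1})"
    by (simp only: image_insert image_image nth_Cons_Suc nth_Cons_0)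
  then show ?case using 1 by simp
qed auto

lemma path_edges_rev: "path_edges (rev xs) = path_edges xs"
proof (induction xs rule: path_edges.induct)
  case (1 x y zs)
  have "path_edges (rev (x # y # zs)) = path_edges (rev (y # zs)) \<union> {{y, x}}"
    using path_edges_append[of "rev zs" y "[x]"] by simp
  then show ?case using 1 by (simp add: insert_commute)
qed auto

lemma path_edges_sorted_consecutive:
  assumes "sorted_wrt (<) (xs :: 'b::linorder list)" "u \<in> set xs" "v \<in> set xs" "u < v"
    and "\<forall>w\<in>set xs. \<not> (u < w \<and> w < v)"
  shows "{u, v} \<in> path_edges xs"
  using assms
proof (induction xs rule: path_edges.induct)
  case (1 x y zs)
  show ?case
  proof (cases "u = x")
    case True
    have "y \<le> v" using 1(2,4,5) True by auto
    moreover have "\<not> (u < y \<and> y < v)" using 1(6) by simp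
    ultimately have "v = y" using 1(2) True by auto
    then show ?thesis using True by simp
  next
    case False
    then have "u \<in> set (y # zs)" "v \<in> set (y # zs)" using 1(2-5) by auto
    then show ?thesis using 1 by simp
  qed
qed auto

lemma cycle_edges_conv_nth:
  assumes "vs \<noteq> []"
  shows "cycle_edges vs = {{vs ! i, vs ! ((i + 1) mod length vs)} | i. i < length vs}"
proof -
  have "(vs @ [hd vs]) ! Suc i = vs ! ((i + 1) mod length vs)" if "i < length vs" for i
    using that assms by (cases "Suc i = length vs") (auto simp: nth_append hd_conv_nth)
  moreover have "(vs @ [hd vs]) ! i = vs ! i" if "i < length vs" for i
    using that by (simp add: nth_append)
  ultimately have "cycle_edges vs = (\<lambda>i. {vs ! i, vs ! ((i + 1) mod length vs)}) ` {..<length vs}"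
    unfolding cycle_edges_def path_edges_conv_nth by (intro image_cong) simp_all
  then show ?thesis by blast
qed

lemma is_cycle_iff:
  "is_cycle V E \<longleftrightarrow> (\<exists>vs. 3 \<le> length vs \<and> distinct vs \<and> V = set vs \<and> E = cycle_edges vs)"
  unfolding is_cycle_def
proof (rule ex_cong1)
  fix vs :: "'a list"
  have "3 \<le> length vs \<Longrightarrow> cycle_edges vs = {{vs ! i, vs ! ((i + 1) mod length vs)} | i. i < length vs}"
    by (intro cycle_edges_conv_nth) auto
  then show "(3 \<le> length vs \<and> distinct vs \<and> V = set vs \<and>
      E = {{vs ! i, vs ! ((i + 1) mod length vs)} | i. i < length vs})
    \<longleftrightarrow> (3 \<le> length vs \<and> distinct vs \<and> V = set vs \<and> E = cycle_edges vs)"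
    by auto
qed

lemma cycle_edges_rotate1: "cycle_edges (rotate1 vs) = cycle_edges vs"
proof (cases vs)
  case (Cons x xs)
  show ?thesis
  proof (cases xs)
    case (Cons y ys)
    have "cycle_edges (rotate1 vs) = path_edges (xs @ x # [y])"
      using \<open>vs = x # xs\<close> Cons by (simp add: cycle_edges_def)
    also have "\<dots> = insert {x, y} (path_edges (xs @ [x]))"
      using path_edges_append[of xs x "[y]"] by simp
    also have "\<dots> = cycle_edges vs"
      using \<open>vs = x # xs\<close> Cons by (simp add: cycle_edges_def)
    finally show ?thesis .
  qed (simp add: \<open>vs = x # xs\<close>)
qed simp

lemma cycle_edges_rotate: "cycle_edges (rotate r vs) = cycle_edges vs"
  by (induction r) (simp_all add: cycle_edges_rotate1)

lemma path_edges_subset_cycle_edges: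
  assumes "xs \<noteq> []" "ys \<noteq> []"
  shows "path_edges (xs @ [hd ys]) \<subseteq> cycle_edges (xs @ ys)"
  using assms path_edges_append[of xs "hd ys" "tl ys @ [hd xs]"]
  by (cases ys) (auto simp: cycle_edges_def)

lemma cycle_edges_subset:
  assumes "e \<in> cycle_edges vs"
  shows "e \<subseteq> set vs"
proof (cases "vs = []")
  case False
  then show ?thesis using assms by (auto simp: cycle_edges_conv_nth)
qed (use assms in \<open>simp add: cycle_edges_def\<close>)

section \<open>Layouts of cycles and chains of cycles\<close>

lemma distinct_nth_extension:
  assumes "distinct vs"
  obtains h where "\<And>i. i < length vs \<Longrightarrow> h (vs ! i) = g i"
proof
  define idx where "idx = the_inv_into {..<length vs} ((!) vs)"
  show "(g \<circ> idx) (vs ! i) = g i" if "i < length vs" for i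
    using the_inv_into_f_f[OF inj_on_nth[OF assms, of "{..<length vs}"]] that
    by (simp add: idx_def)
qed

text \<open>The layout of a cycle vs!0, \<dots>, vs!(m-1) which walks along the arc from vs!0 to vs!(k-1),
  then backwards along the other arc from vs!(m-1) to vs!(k+1), and puts vs!k last.
  Every cut separates exactly one edge of each arc.\<close>
definition arc_position :: "nat \<Rightarrow> nat \<Rightarrow> nat \<Rightarrow> nat" where
  "arc_position m k i = (if i < k then i else if i = k then m - 1 else k + m - 1 - i)"

lemma arc_position_inj: "k < m \<Longrightarrow> inj_on (arc_position m k) {..<m}"
  unfolding arc_position_def by (auto intro!: inj_onI split: if_splits)

lemma arc_position_cut:
  assumes "i < m" "0 < k" "k < m"
    and "(arc_position m k i \<le> t \<and> t < arc_position m k ((i + 1) mod m))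
       \<or> (arc_position m k ((i + 1) mod m) \<le> t \<and> t < arc_position m k i)"
  shows "i = (if t < k then t else k - 1) \<or> i = (if t < k then m - 1 else k + m - 2 - t)"
proof -
  have "(i + 1) mod m = (if i = m - 1 then 0 else i + 1)"
    using assms(1) by (auto simp: Suc_lessI)
  then show ?thesis using assms unfolding arc_position_def by (auto split: if_splits)
qed

lemma arc_layout_crossing_edges:
  assumes k: "0 < k" "k < length vs"
    and h: "\<And>i. i < length vs \<Longrightarrow> h (vs ! i) = arc_position (length vs) k i"
  shows "card (crossing_edges h (cycle_edges vs) t) \<le> 2"
proof -
  define m where "m = length vs"
  define edge where "edge i = {vs ! i, vs ! ((i + 1) mod m)}" for i
  have "vs \<noteq> []" using k by (cases vs) auto
  then have edges: "cycle_edges vs = edge ` {..<m}"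
    using cycle_edges_conv_nth[of vs] unfolding edge_def m_def by blast
  define i1 where "i1 = (if t < k then t else k - 1)"
  define i2 where "i2 = (if t < k then m - 1 else k + m - 2 - t)"
  have "crossing_edges h (cycle_edges vs) t \<subseteq> {edge i1, edge i2}"
  proof
    fix e assume "e \<in> crossing_edges h (cycle_edges vs) t"
    then obtain i u v where i: "i < m" "e = edge i" "e = {u, v}" "h u \<le> t" "t < h v"
      unfolding crossing_edges_def edges by auto
    have "(i + 1) mod m < m" using i(1) by simp
    then have "(arc_position m k i \<le> t \<and> t < arc_position m k ((i + 1) mod m))
        \<or> (arc_position m k ((i + 1) mod m) \<le> t \<and> t < arc_position m k i)"
      using i h[of i] h[of "(i + 1) mod m"] by (auto simp: edge_def doubleton_eq_iff m_def)
    then have "i = i1 \<or> i = i2"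
      unfolding i1_def i2_def using arc_position_cut[OF i(1) k(1)] k m_def by auto
    then show "e \<in> {edge i1, edge i2}" using i by auto
  qed
  then have "card (crossing_edges h (cycle_edges vs) t) \<le> card {edge i1, edge i2}"
    by (intro card_mono) auto
  also have "\<dots> \<le> 2" by (rule card_insert_le_m1) auto
  finally show ?thesis .
qed

lemma cycle_layout_nth:
  assumes dist: "distinct vs" and k: "0 < k" "k < length vs"
  shows "\<exists>h. width2_layout h (set vs) (cycle_edges vs) \<and> h (vs ! 0) = 0
           \<and> (\<forall>w\<in>set vs. h w \<le> h (vs ! k))"
proof -
  obtain h where h: "\<And>i. i < length vs \<Longrightarrow> h (vs ! i) = arc_position (length vs) k i"
    using distinct_nth_extension[OF dist] by blast
  have "0 < length vs" using k by linarith
  have "inj_on h (set vs)"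
  proof (rule inj_onI)
    fix a b assume "a \<in> set vs" "b \<in> set vs" "h a = h b"
    then obtain i j where "i < length vs" "j < length vs" "a = vs ! i" "b = vs ! j"
      "arc_position (length vs) k i = arc_position (length vs) k j"
      using h by (auto simp: in_set_conv_nth)
    then show "a = b" using arc_position_inj[OF k(2)] by (auto dest: inj_onD)
  qed
  moreover have "finite (cycle_edges vs)" by (simp add: cycle_edges_def path_edges_conv_nth)
  moreover have "h (vs ! 0) = 0" using h[OF \<open>0 < length vs\<close>] k by (simp add: arc_position_def)
  moreover have "h w \<le> h (vs ! k)" if "w \<in> set vs" for w
    using that h k by (auto simp: in_set_conv_nth arc_position_def)
  ultimately show ?thesis
    using arc_layout_crossing_edges[OF k h] by (auto simp: width2_layout_def)
qed

lemma cycle_layout: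
  assumes cyc: "is_cycle V E" and "x \<in> V" "y \<in> V" "x \<noteq> y"
  shows "\<exists>h. width2_layout h V E \<and> h x = 0 \<and> (\<forall>w\<in>V. h w \<le> h y)"
proof -
  obtain vs where vs: "3 \<le> length vs" "distinct vs" "V = set vs" "E = cycle_edges vs"
    using cyc by (auto simp: is_cycle_iff)
  obtain r where r: "r < length vs" "vs ! r = x" using assms vs by (auto simp: in_set_conv_nth)
  define ws where "ws = rotate r vs"
  have "ws ! 0 = vs ! ((r + 0) mod length vs)"
    unfolding ws_def using r(1) by (intro nth_rotate) (cases vs, auto)
  then have ws: "distinct ws" "set ws = V" "cycle_edges ws = E" "ws ! 0 = x"
    using vs r by (auto simp: ws_def cycle_edges_rotate)
  obtain k where "k < length ws" "ws ! k = y" using assms ws by (auto simp: in_set_conv_nth)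
  moreover have "0 < k" using calculation ws(4) assms by (cases k) auto
  ultimately show ?thesis using cycle_layout_nth[OF ws(1), of k] ws by auto
qed

lemma is_cycle_edge_subset: "is_cycle V E \<Longrightarrow> e \<in> E \<Longrightarrow> e \<subseteq> V"
  by (auto simp: is_cycle_iff dest: cycle_edges_subset)

lemma is_cycle_other_vertex:
  assumes "is_cycle V E"
  obtains y where "y \<in> V" "y \<noteq> x"
proof -
  obtain vs where vs: "3 \<le> length vs" "distinct vs" "V = set vs"
    using assms by (auto simp: is_cycle_iff)
  then have "0 < length vs" "1 < length vs" by auto
  then have "vs ! 0 \<noteq> vs ! 1" "vs ! 0 \<in> V" "vs ! 1 \<in> V"
    using vs nth_eq_iff_index_eq[OF vs(2)] by auto
  then show ?thesis using that by metis
qed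

definition glue_layout :: "('a \<Rightarrow> nat) \<Rightarrow> 'a set \<Rightarrow> 'a \<Rightarrow> ('a \<Rightarrow> nat) \<Rightarrow> 'a \<Rightarrow> nat" where
  "glue_layout h1 V1 x h2 w = (if w \<in> V1 then h1 w else h1 x + h2 w)"

lemma glue_layout_right:
  assumes "V1 \<inter> V2 = {x}" "h2 x = 0" "w \<in> V2"
  shows "glue_layout h1 V1 x h2 w = h1 x + h2 w"
proof (cases "w \<in> V1")
  case True
  then have "w = x" using assms by blast
  then show ?thesis using assms(2) by (simp add: glue_layout_def)
qed (simp add: glue_layout_def)

lemma glue_layout_le:
  assumes "V1 \<inter> V2 = {x}" "\<forall>w\<in>V1. h1 w \<le> h1 x" "h2 x = 0"
    and "w \<in> V1 \<union> V2" "y \<in> V2" "\<forall>w\<in>V2. h2 w \<le> h2 y"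
  shows "glue_layout h1 V1 x h2 w \<le> glue_layout h1 V1 x h2 y"
  using assms glue_layout_right[of V1 V2 x h2, OF assms(1,3)]
  by (cases "w \<in> V1") (force simp: glue_layout_def, auto)

lemma inj_on_glue_layout:
  assumes h1: "inj_on h1 V1" and h2: "inj_on h2 V2"
    and cut: "V1 \<inter> V2 = {x}" and x_last: "\<forall>w\<in>V1. h1 w \<le> h1 x" and x_first: "h2 x = 0"
  shows "inj_on (glue_layout h1 V1 x h2) (V1 \<union> V2)"
proof (rule inj_onI)
  let ?h = "glue_layout h1 V1 x h2"
  fix a b assume ab: "a \<in> V1 \<union> V2" "b \<in> V1 \<union> V2" "?h a = ?h b"
  have right: "?h w = h1 x + h2 w" if "w \<in> V2" for w
    using glue_layout_right[of V1 V2 x h2, OF cut x_first that] .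
  have before_x: "?h w \<le> h1 x" if "w \<in> V1" for w
    using that x_last by (simp add: glue_layout_def)
  have after_x: "h1 x < ?h w" if "w \<in> V2" "w \<notin> V1" for w
  proof -
    have "h2 w \<noteq> h2 x" using h2 that cut by (auto dest: inj_onD)
    then show ?thesis using right[OF that(1)] x_first by simp
  qed
  show "a = b"
  proof (cases "a \<in> V1 \<longleftrightarrow> b \<in> V1")
    case True
    then consider "a \<in> V1" "b \<in> V1" | "a \<in> V2" "b \<in> V2" using ab by blast
    then show ?thesis
      using ab h1 h2 right by cases (auto simp: glue_layout_def dest: inj_onD)
  next
    case False
    then show ?thesis using ab before_x after_x by (metis Un_iff not_le)
  qed
qed

lemma width2_layout_glue:
  assumes h1: "width2_layout h1 V1 E1" and h2: "width2_layout h2 V2 E2"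
    and E1: "\<forall>e\<in>E1. e \<subseteq> V1" and E2: "\<forall>e\<in>E2. e \<subseteq> V2"
    and cut: "V1 \<inter> V2 = {x}" and x_last: "\<forall>w\<in>V1. h1 w \<le> h1 x" and x_first: "h2 x = 0"
  shows "width2_layout (glue_layout h1 V1 x h2) (V1 \<union> V2) (E1 \<union> E2)"
proof -
  let ?h = "glue_layout h1 V1 x h2"
  have card: "card (crossing_edges ?h (E1 \<union> E2) t) \<le> 2" for t
  proof -
    have cr1: "crossing_edges ?h E1 t = crossing_edges h1 E1 t"
      using E1 by (rule crossing_edges_cong) (simp add: glue_layout_def)
    have cr2: "crossing_edges ?h E2 t = crossing_edges (\<lambda>w. h1 x + h2 w) E2 t"
      using E2 glue_layout_right[of V1 V2 x h2, OF cut x_first] by (rule crossing_edges_cong)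
    show ?thesis
    proof (cases "t < h1 x")
      case True
      then have "crossing_edges ?h (E1 \<union> E2) t = crossing_edges h1 E1 t"
        by (simp add: crossing_edges_Un cr1 cr2 crossing_edges_shift)
      then show ?thesis using h1 by (simp add: width2_layout_def)
    next
      case False
      have "crossing_edges ?h E1 t = {}"
        using crossing_edges_beyond[OF E1, of ?h "h1 x"] x_last False
        by (simp add: glue_layout_def)
      then have "crossing_edges ?h (E1 \<union> E2) t = crossing_edges h2 E2 (t - h1 x)"
        using False by (simp add: crossing_edges_Un cr2 crossing_edges_shift)
      then show ?thesis using h2 by (simp add: width2_layout_def)
    qed
  qed
  show ?thesis
    using card inj_on_glue_layout[of h1 V1 h2 V2 x, OF _ _ cut x_last x_first] h1 h2
    by (simp add: width2_layout_def)
qed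

locale cycle_chain =
  fixes n :: nat and ZV :: "nat \<Rightarrow> 'a set" and ZE :: "nat \<Rightarrow> 'a set set" and a b :: "nat \<Rightarrow> 'a"
  assumes n: "1 \<le> n"
    and cycles: "\<forall>j\<in>{1..n}. is_cycle (ZV j) (ZE j) \<and> a j \<in> ZV j \<and> b j \<in> ZV j"
    and disjoint: "\<forall>i\<in>{1..n}. \<forall>j\<in>{1..n}. (i + 1 < j \<or> j + 1 < i) \<longrightarrow> ZV i \<inter> ZV j = {}"
    and links: "\<forall>j\<in>{2..n}. ZV (j - 1) \<inter> ZV j = {b (j - 1)} \<and> ZV (j - 1) \<inter> ZV j = {a j}"
begin

lemma a_Suc_eq_b: "1 \<le> k \<Longrightarrow> k < n \<Longrightarrow> a (Suc k) = b k"
  using links[rule_format, of "Suc k"] by auto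

lemma a_neq_b:
  assumes "2 \<le> k" "k < n"
  shows "a k \<noteq> b k"
proof
  assume eq: "a k = b k"
  have "a k \<in> ZV (k - 1)" using links assms by fastforce
  moreover have "b k \<in> ZV (Suc k)" using links[rule_format, of "Suc k"] assms by auto
  moreover have "k - 1 \<in> {1..n}" "Suc k \<in> {1..n}" "k - 1 + 1 < Suc k" using assms by auto
  then have "ZV (k - 1) \<inter> ZV (Suc k) = {}" using disjoint by blast
  ultimately show False using eq by auto
qed

lemma prefix_Int_next:
  assumes "1 \<le> k" "k < n"
  shows "(\<Union>j\<in>{1..k}. ZV j) \<inter> ZV (Suc k) = {b k}"
proof
  have last: "ZV k \<inter> ZV (Suc k) = {b k}" using links[rule_format, of "Suc k"] assms by auto
  then show "{b k} \<subseteq> (\<Union>j\<in>{1..k}. ZV j) \<inter> ZV (Suc k)" using assms by auto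
  show "(\<Union>j\<in>{1..k}. ZV j) \<inter> ZV (Suc k) \<subseteq> {b k}"
  proof
    fix w assume "w \<in> (\<Union>j\<in>{1..k}. ZV j) \<inter> ZV (Suc k)"
    then obtain j where j: "j \<in> {1..k}" "w \<in> ZV j" "w \<in> ZV (Suc k)" by blast
    show "w \<in> {b k}"
    proof (cases "j = k")
      case False
      then have "ZV j \<inter> ZV (Suc k) = {}"
        using disjoint[rule_format, of j "Suc k"] j(1) assms by auto
      then show ?thesis using j by blast
    qed (use j last in blast)
  qed
qed

lemma prefix_layout:
  assumes "1 \<le> k" "k \<le> n" "y \<in> ZV k" "k = 1 \<or> y \<noteq> a k"
  shows "\<exists>h. width2_layout h (\<Union>j\<in>{1..k}. ZV j) (\<Union>j\<in>{1..k}. ZE j)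
           \<and> (\<forall>w\<in>\<Union>j\<in>{1..k}. ZV j. h w \<le> h y)"
  using assms
proof (induction k arbitrary: y)
  case (Suc k)
  have cycle: "is_cycle (ZV (Suc k)) (ZE (Suc k))" using cycles Suc.prems by auto
  show ?case
  proof (cases "k = 0")
    case True
    obtain x where "x \<in> ZV (Suc k)" "x \<noteq> y" using is_cycle_other_vertex[OF cycle] by metis
    then obtain h where "width2_layout h (ZV (Suc k)) (ZE (Suc k))" "\<forall>w\<in>ZV (Suc k). h w \<le> h y"
      using cycle_layout[OF cycle _ Suc.prems(3)] by blast
    then show ?thesis using True by auto
  next
    case False
    then have k: "1 \<le> k" "k < n" using Suc.prems by auto
    have "b k \<in> ZV k" using cycles k by auto
    moreover have "k = 1 \<or> b k \<noteq> a k" using a_neq_b[of k] k by force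
    ultimately obtain h1 where h1: "width2_layout h1 (\<Union>j\<in>{1..k}. ZV j) (\<Union>j\<in>{1..k}. ZE j)"
      "\<forall>w\<in>\<Union>j\<in>{1..k}. ZV j. h1 w \<le> h1 (b k)"
      using Suc.IH[OF k(1) less_imp_le[OF k(2)]] by blast
    have "b k \<in> ZV (Suc k)" "b k \<noteq> y" using prefix_Int_next[OF k] Suc.prems a_Suc_eq_b[OF k] by auto
    then obtain h2 where h2: "width2_layout h2 (ZV (Suc k)) (ZE (Suc k))" "h2 (b k) = 0"
      "\<forall>w\<in>ZV (Suc k). h2 w \<le> h2 y"
      using cycle_layout[OF cycle] Suc.prems(3) by metis
    have "\<forall>e\<in>\<Union>j\<in>{1..k}. ZE j. e \<subseteq> (\<Union>j\<in>{1..k}. ZV j)"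
      using cycles k by (fastforce dest: is_cycle_edge_subset)
    moreover have "\<forall>e\<in>ZE (Suc k). e \<subseteq> ZV (Suc k)" using cycle is_cycle_edge_subset by blast
    moreover have "{1..Suc k} = insert (Suc k) {1..k}" by auto
    ultimately show ?thesis
      using width2_layout_glue[OF h1(1) h2(1) _ _ prefix_Int_next[OF k] h1(2) h2(2)]
        glue_layout_le[OF prefix_Int_next[OF k] h1(2) h2(2) _ Suc.prems(3) h2(3)]
      by (intro exI[of _ "glue_layout h1 (\<Union>j\<in>{1..k}. ZV j) (b k) h2"]) (simp add: Un_commute)
  qed
qed simp

end

lemma width2_layout_chain_of_cycles:
  assumes "chain_of_cycles W F"
  shows "\<exists>h. width2_layout h W F"
proof -
  obtain n ZV ZE a b where chain: "cycle_chain n ZV ZE a b"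
    and W: "W = (\<Union>j\<in>{1..n}. ZV j)" and F: "F = (\<Union>j\<in>{1..n}. ZE j)"
    using assms unfolding chain_of_cycles_def cycle_chain_def by blast
  interpret cycle_chain n ZV ZE a b by (fact chain)
  have "is_cycle (ZV n) (ZE n)" using cycles n by auto
  then obtain y where "y \<in> ZV n" "y \<noteq> a n" by (rule is_cycle_other_vertex)
  then show ?thesis using prefix_layout[OF n order.refl] W F by blast
qed

section \<open>Lanes and passing edges\<close>

lemma subset_singleton_if_card_le_1:
  assumes "finite A" "card A \<le> 1"
  obtains c where "A \<subseteq> {c}"
proof (cases "A = {}")
  case False
  then obtain c where "c \<in> A" by blast
  moreover have "\<forall>a\<in>A. \<forall>b\<in>A. a = b" using assms card_le_Suc0_iff_eq by auto
  ultimately show ?thesis using that by blast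
qed simp

lemma Min_doubleton: "h u \<le> h v \<Longrightarrow> Min (h ` {u, v}) = h u"
  by (simp add: min_def)

lemma crossing_edges_Min:
  assumes "e \<in> E" "e = {u, v}" "h u < h v"
  shows "e \<in> crossing_edges h E (Min (h ` e))"
  using assms Min_doubleton[of h u v] by (auto simp: crossing_edges_def)

lemma crossing_edges_Min_mono:
  assumes e': "e' \<in> crossing_edges h E t" and e: "e \<in> crossing_edges h E t"
    and le: "Min (h ` e') \<le> Min (h ` e)"
  shows "e' \<in> crossing_edges h E (Min (h ` e))"
proof -
  obtain p q where pq: "e' \<in> E" "e' = {p, q}" "h p \<le> t" "t < h q"
    using e' by (auto simp: crossing_edges_def)
  obtain u v where uv: "e = {u, v}" "h u \<le> t" "t < h v"
    using e by (auto simp: crossing_edges_def)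
  have "Min (h ` e') = h p" "Min (h ` e) = h u" using pq uv Min_doubleton by auto
  then show ?thesis using pq uv le unfolding crossing_edges_def
    by (intro CollectI conjI exI[of _ p] exI[of _ q]) auto
qed

definition lane_colouring :: "('a \<Rightarrow> nat) \<Rightarrow> 'a set set \<Rightarrow> 'a set set \<Rightarrow> ('a set \<Rightarrow> bool) \<Rightarrow> bool" where
  "lane_colouring h E S lane \<longleftrightarrow> (\<forall>t. \<forall>e1\<in>crossing_edges h E t \<inter> S.
     \<forall>e2\<in>crossing_edges h E t \<inter> S. e1 \<noteq> e2 \<longrightarrow> lane e1 \<noteq> lane e2)"

lemma lane_colouring_insert:
  assumes lane: "lane_colouring h E S lane"
    and only_c: "\<And>e t. e \<in> S \<Longrightarrow> e \<noteq> x \<Longrightarrow> e \<in> crossing_edges h E t \<Longrightarrow>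
        x \<in> crossing_edges h E t \<Longrightarrow> e = c"
  shows "lane_colouring h E (insert x S) (lane(x := \<not> lane c))"
  unfolding lane_colouring_def
proof (intro allI ballI impI)
  fix t e1 e2
  assume e: "e1 \<in> crossing_edges h E t \<inter> insert x S" "e2 \<in> crossing_edges h E t \<inter> insert x S"
    "e1 \<noteq> e2"
  show "(lane(x := \<not> lane c)) e1 \<noteq> (lane(x := \<not> lane c)) e2"
  proof (cases "e1 = x \<or> e2 = x")
    case True
    then consider "e1 = x" "e2 \<in> S" "e2 \<noteq> x" | "e2 = x" "e1 \<in> S" "e1 \<noteq> x"
      using e by blast
    then show ?thesis
    proof cases
      case 1
      then have "e2 = c" using only_c e by blast
      then show ?thesis using 1 by simp
    next
      case 2
      then have "e1 = c" using only_c e by blast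
      then show ?thesis using 2 by simp
    qed
  next
    case False
    then show ?thesis using e lane unfolding lane_colouring_def by auto
  qed
qed

lemma crossing_edges_two_colouring:
  assumes finE: "finite E" and oriented: "\<forall>e\<in>E. \<exists>u v. e = {u, v} \<and> h u < h v"
    and width: "\<forall>t. card (crossing_edges h E t) \<le> 2"
  shows "\<exists>lane :: 'a set \<Rightarrow> bool. \<forall>t. \<forall>e1\<in>crossing_edges h E t. \<forall>e2\<in>crossing_edges h E t.
           e1 \<noteq> e2 \<longrightarrow> lane e1 \<noteq> lane e2"
proof -
  have "S \<subseteq> E \<longrightarrow> (\<exists>lane. lane_colouring h E S lane)" if "finite S" for S
    using that
  proof (induction S rule: finite_ranking_induct[where f = "\<lambda>e. Min (h ` e)"])
    case (insert x S)
    show ?case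
    proof
      assume sub: "insert x S \<subseteq> E"
      then obtain lane where lane: "lane_colouring h E S lane" using insert.IH by blast
      txt \<open>Edges are added by increasing left end, so every earlier edge sharing a cut with x
        crosses the cut at the left end of x, where x leaves room for just one other edge.\<close>
      define D where "D = crossing_edges h E (Min (h ` x)) - {x}"
      have "x \<in> E" using sub by simp
      then obtain u v where "x = {u, v}" "h u < h v" using oriented by blast
      then have "x \<in> crossing_edges h E (Min (h ` x))"
        using crossing_edges_Min[OF \<open>x \<in> E\<close>] by blast
      then have "card D \<le> 1"
        using width[rule_format, of "Min (h ` x)"] finite_crossing_edges[OF finE]
        by (simp add: D_def card_Diff_singleton le_diff_conv)
      moreover have "finite D" using finite_crossing_edges[OF finE] by (simp add: D_def)
      ultimately obtain c where "D \<subseteq> {c}" using subset_singleton_if_card_le_1 by blast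
      then have "e = c"
        if "e \<in> S" "e \<noteq> x" "e \<in> crossing_edges h E t" "x \<in> crossing_edges h E t" for e t
        using crossing_edges_Min_mono[OF that(3,4) insert.hyps(2)[OF that(1)]] that(2)
        unfolding D_def by blast
      then have "lane_colouring h E (insert x S) (lane(x := \<not> lane c))"
        by (rule lane_colouring_insert[OF lane])
      then show "\<exists>lane. lane_colouring h E (insert x S) lane" by blast
    qed
  qed (auto simp: lane_colouring_def)
  then obtain lane where "lane_colouring h E E lane" using finE by blast
  moreover have "crossing_edges h E t \<inter> E = crossing_edges h E t" for t
    by (auto simp: crossing_edges_def)
  ultimately show ?thesis unfolding lane_colouring_def by metis
qed

definition passes :: "('a \<Rightarrow> nat) \<Rightarrow> 'a set \<Rightarrow> 'a \<Rightarrow> bool" where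
  "passes h e w \<longleftrightarrow> (\<exists>u v. e = {u, v} \<and> h u < h w \<and> h w < h v)"

lemma passing_edge_unique:
  assumes h: "width2_layout h V E" and sub: "\<forall>e\<in>E. e \<subseteq> V \<and> card e = 2"
    and w: "e0 \<in> E" "w \<in> e0"
    and e: "e1 \<in> E" "e2 \<in> E" "passes h e1 w" "passes h e2 w"
  shows "e1 = e2"
proof (rule ccontr)
  assume ne: "e1 \<noteq> e2"
  obtain z where z: "e0 = {w, z}" "z \<noteq> w"
    using sub w by (metis card_2_iff insert_commute insertE singletonD)
  have "w \<in> V" "z \<in> V" using sub w z by auto
  then have "h z \<noteq> h w" using h z(2) by (auto simp: width2_layout_def dest: inj_onD)
  define t where "t = (if h w < h z then h w else h w - 1)"
  have "e0 \<in> crossing_edges h E t"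
  proof (cases "h w < h z")
    case True
    then show ?thesis using w z unfolding crossing_edges_def t_def
      by (intro CollectI conjI exI[of _ w] exI[of _ z]) auto
  next
    case False
    then show ?thesis using w z \<open>h z \<noteq> h w\<close> unfolding crossing_edges_def t_def
      by (intro CollectI conjI exI[of _ z] exI[of _ w]) (auto simp: insert_commute)
  qed
  moreover have "e \<in> crossing_edges h E t" if "e \<in> E" "passes h e w" for e
    using that unfolding crossing_edges_def passes_def t_def by fastforce
  ultimately have "card {e0, e1, e2} \<le> 2" using e by (intro card_crossing_edges_le[OF h]) auto
  have "w \<notin> e1" "w \<notin> e2" using e(3,4) by (auto simp: passes_def)
  then have "e0 \<noteq> e1" "e0 \<noteq> e2" using w by auto
  then have "card {e0, e1, e2} = 3" using ne by simp
  with \<open>card {e0, e1, e2} \<le> 2\<close> show False by simp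
qed

lemma width2_layout_isolated_last:
  assumes f: "width2_layout f V E" and fin: "finite V" and sub: "\<forall>e\<in>E. e \<subseteq> V"
  obtains h where "width2_layout h V E"
    and "\<And>w e. w \<in> V \<Longrightarrow> e \<in> E \<Longrightarrow> passes h e w \<Longrightarrow> \<exists>e0\<in>E. w \<in> e0"
proof
  define N where "N = Suc (Max (insert 0 (f ` V)))"
  define h where "h v = (if \<exists>e\<in>E. v \<in> e then f v else N + f v)" for v
  have f_less: "f v < N" if "v \<in> V" for v
    using fin that by (simp add: N_def le_imp_less_Suc)
  have h_edge: "h v = f v" if "e \<in> E" "v \<in> e" for e v
    using that by (auto simp: h_def)
  have "crossing_edges h E t = crossing_edges f E t" for t
    using h_edge by (intro crossing_edges_cong[where V = "\<Union>E"]) auto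
  moreover have "inj_on h V"
  proof (rule inj_onI)
    fix a b assume ab: "a \<in> V" "b \<in> V" "h a = h b"
    have "h v < N \<longleftrightarrow> (\<exists>e\<in>E. v \<in> e)" if "v \<in> V" for v
      using f_less[OF that] by (auto simp: h_def)
    then have "(\<exists>e\<in>E. a \<in> e) \<longleftrightarrow> (\<exists>e\<in>E. b \<in> e)" using ab by metis
    then have "f a = f b" using ab(3) by (auto simp: h_def split: if_splits)
    then show "a = b" using ab f by (auto simp: width2_layout_def dest: inj_onD)
  qed
  ultimately show "width2_layout h V E" using f by (simp add: width2_layout_def)
  show "\<exists>e0\<in>E. w \<in> e0" if e: "e \<in> E" "passes h e w" for w e
  proof (rule ccontr)
    assume "\<not> (\<exists>e0\<in>E. w \<in> e0)"
    then have "N \<le> h w" by (simp add: h_def)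
    moreover obtain u v where "e = {u, v}" "h w < h v" using e(2) by (auto simp: passes_def)
    then have "h w < f v" "v \<in> V" using h_edge[OF e(1)] sub e(1) by auto
    ultimately show False using f_less by fastforce
  qed
qed


section \<open>Block cycles\<close>

lemma path_edges_sorted_interval:
  fixes A :: "nat set"
  assumes "finite A" "A \<subseteq> {lo<..<hi}" "lo < hi"
    and "p \<in> {lo, hi} \<union> A" "q \<in> {lo, hi} \<union> A" "p < q" "\<forall>a\<in>A. \<not> (p < a \<and> a < q)"
  shows "{p, q} \<in> path_edges (lo # sorted_list_of_set A @ [hi])"
proof (rule path_edges_sorted_consecutive)
  show "sorted_wrt (<) (lo # sorted_list_of_set A @ [hi])"
    using assms(1-3) by (auto simp: sorted_wrt_append)
  have "lo \<le> p" "q \<le> hi" using assms(2-6) by auto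
  then show "\<forall>w\<in>set (lo # sorted_list_of_set A @ [hi]). \<not> (p < w \<and> w < q)"
    using assms(1,7) by auto
qed (use assms in auto)

definition block_cycle :: "nat \<Rightarrow> nat \<Rightarrow> nat set \<Rightarrow> nat set \<Rightarrow> nat list" where
  "block_cycle lo hi A B = lo # sorted_list_of_set A @ hi # rev (sorted_list_of_set B)"

lemma set_block_cycle:
  "finite A \<Longrightarrow> finite B \<Longrightarrow> set (block_cycle lo hi A B) = {lo, hi} \<union> A \<union> B"
  by (auto simp: block_cycle_def)

lemma is_cycle_block_cycle:
  assumes "finite A" "finite B" "A \<union> B \<noteq> {}" "A \<inter> B = {}" "A \<union> B \<subseteq> {lo<..<hi}"
  shows "is_cycle (set (block_cycle lo hi A B)) (cycle_edges (block_cycle lo hi A B))"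
proof -
  have "distinct (block_cycle lo hi A B)" using assms by (auto simp: block_cycle_def)
  moreover have "0 < card (A \<union> B)" using assms(1-3) by (simp add: card_gt_0_iff)
  then have "card A + card B \<noteq> 0" using card_Un_le[of A B] by linarith
  moreover have "length (block_cycle lo hi A B) = card A + card B + 2"
    using assms(1,2) by (simp add: block_cycle_def)
  ultimately have "3 \<le> length (block_cycle lo hi A B)" by linarith
  with \<open>distinct (block_cycle lo hi A B)\<close> show ?thesis by (auto simp: is_cycle_iff)
qed

lemma block_cycle_edge_upper:
  assumes "finite A" "A \<subseteq> {lo<..<hi}" "lo < hi"
    and "p \<in> {lo, hi} \<union> A" "q \<in> {lo, hi} \<union> A" "p < q" "\<forall>a\<in>A. \<not> (p < a \<and> a < q)"
  shows "{p, q} \<in> cycle_edges (block_cycle lo hi A B)"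
proof -
  have "{p, q} \<in> path_edges ((lo # sorted_list_of_set A) @ [hd (hi # rev (sorted_list_of_set B))])"
    using path_edges_sorted_interval[OF assms] by simp
  then show ?thesis using path_edges_subset_cycle_edges by (fastforce simp: block_cycle_def)
qed

lemma block_cycle_edge_lower:
  assumes "finite B" "B \<subseteq> {lo<..<hi}" "lo < hi"
    and "p \<in> {lo, hi} \<union> B" "q \<in> {lo, hi} \<union> B" "p < q" "\<forall>b\<in>B. \<not> (p < b \<and> b < q)"
  shows "{p, q} \<in> cycle_edges (block_cycle lo hi A B)"
proof -
  define P where "P = lo # sorted_list_of_set A"
  define Q where "Q = hi # rev (sorted_list_of_set B)"
  have "rev (lo # sorted_list_of_set B @ [hi]) = Q @ [hd P]" by (simp add: P_def Q_def)
  then have "{p, q} \<in> path_edges (Q @ [hd P])"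
    using path_edges_sorted_interval[OF assms] path_edges_rev by metis
  also have "\<dots> \<subseteq> cycle_edges (Q @ P)" by (rule path_edges_subset_cycle_edges) (simp_all add: P_def Q_def)
  also have "\<dots> = cycle_edges (P @ Q)" by (metis cycle_edges_rotate rotate_append)
  finally show ?thesis by (simp add: block_cycle_def P_def Q_def)
qed

lemma interval_family_disjoint:
  fixes c :: "nat \<Rightarrow> nat"
  assumes mono: "\<And>k. k < n \<Longrightarrow> c k < c (Suc k)"
    and within: "\<And>k. k < n \<Longrightarrow> ZV k \<subseteq> {c k..c (Suc k)}"
    and ij: "Suc i < j" "j < n"
  shows "ZV i \<inter> ZV j = {}"
proof -
  have "{Suc i..<j} \<subseteq> {..<n}" using ij by auto
  then have "c (Suc i) < c j" using lift_Suc_mono_less_ivl[of "{..<n}" c "Suc i" j] mono ij(1) by blast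
  then show ?thesis using within[of i] within[of j] ij by fastforce
qed

lemma chain_of_cycles_intervals:
  fixes c :: "nat \<Rightarrow> nat" and ZV :: "nat \<Rightarrow> nat set"
  assumes n: "0 < n"
    and mono: "\<And>k. k < n \<Longrightarrow> c k < c (Suc k)"
    and cycles: "\<And>k. k < n \<Longrightarrow> is_cycle (ZV k) (ZE k)"
    and ends: "\<And>k. k < n \<Longrightarrow> c k \<in> ZV k \<and> c (Suc k) \<in> ZV k"
    and within: "\<And>k. k < n \<Longrightarrow> ZV k \<subseteq> {c k..c (Suc k)}"
  shows "chain_of_cycles (\<Union>k<n. ZV k) (\<Union>k<n. ZE k)"
proof -
  have far: "ZV i \<inter> ZV j = {}" if "Suc i < j" "j < n" for i j
    using interval_family_disjoint[of n c ZV, OF mono within that] .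
  have adjacent: "ZV k \<inter> ZV (Suc k) = {c (Suc k)}" if "Suc k < n" for k
  proof
    have "ZV k \<subseteq> {..c (Suc k)}" "ZV (Suc k) \<subseteq> {c (Suc k)..}"
      using within[of k] within[of "Suc k"] that by auto
    then show "ZV k \<inter> ZV (Suc k) \<subseteq> {c (Suc k)}" by (auto intro: antisym)
    show "{c (Suc k)} \<subseteq> ZV k \<inter> ZV (Suc k)" using ends that by simp
  qed
  have shift: "(\<Union>k<n. X k) = (\<Union>j\<in>{1..n}. X (j - 1))" for X :: "nat \<Rightarrow> 'b set"
    unfolding image_Suc_lessThan[symmetric] image_image by simp
  show ?thesis
    unfolding chain_of_cycles_def shift[of ZV] shift[of ZE]
  proof (intro exI conjI ballI impI)
    show "1 \<le> n" using n by simp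
  next
    fix j assume "j \<in> {1..n}"
    then have j: "j - 1 < n" "Suc (j - 1) = j" by auto
    show "is_cycle (ZV (j - 1)) (ZE (j - 1))" using cycles j by simp
    show "c (j - 1) \<in> ZV (j - 1)" "c j \<in> ZV (j - 1)" using ends[OF j(1)] j(2) by auto
  next
    fix i j assume ij: "i \<in> {1..n}" "j \<in> {1..n}" "i + 1 < j \<or> j + 1 < i"
    then consider "Suc (i - 1) < j - 1" "j - 1 < n" | "Suc (j - 1) < i - 1" "i - 1 < n" by force
    then show "ZV (i - 1) \<inter> ZV (j - 1) = {}" using far by cases blast+
  next
    fix j assume "j \<in> {2..n}"
    then have "Suc (j - 1 - 1) < n" "Suc (j - 1 - 1) = j - 1" by auto
    then have "ZV (j - 1 - 1) \<inter> ZV (j - 1) = {c (j - 1)}" using adjacent by metis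
    then show "ZV (j - 1 - 1) \<inter> ZV (j - 1) = {c (j - 1)}" "ZV (j - 1 - 1) \<inter> ZV (j - 1) = {c (j - 1)}"
      by simp_all
  qed simp_all
qed

section \<open>Embedding a layout into a chain of cycles\<close>

lemma step_between:
  fixes f :: "nat \<Rightarrow> 'b::linorder"
  assumes "f 0 \<le> w" "w < f n"
  shows "\<exists>k<n. f k \<le> w \<and> w < f (Suc k)"
  using assms(2)
proof (induction n)
  case 0
  then show ?case using assms(1) by simp
next
  case (Suc n)
  show ?case
  proof (cases "w < f n")
    case True
    then show ?thesis using Suc.IH by (meson less_SucI)
  next
    case False
    then show ?thesis using Suc.prems by (intro exI[of _ n]) simp
  qed
qed

lemma sorted_wrt_less_not_between:
  assumes "sorted_wrt (<) (xs :: 'b::linorder list)" "Suc k < length xs" "x \<in> set xs"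
  shows "x \<le> xs ! k \<or> xs ! Suc k \<le> x"
proof -
  obtain i where i: "i < length xs" "xs ! i = x" using assms(3) by (auto simp: in_set_conv_nth)
  have "sorted xs" using assms(1) by (rule strict_sorted_imp_sorted)
  then show ?thesis using i assms(2) sorted_nth_mono[of xs] by (cases "i \<le> k") auto
qed

locale lane_layout =
  fixes V :: "'a set" and E :: "'a set set" and h :: "'a \<Rightarrow> nat" and lane :: "'a set \<Rightarrow> bool"
  assumes finite_V: "finite V"
    and inj_h: "inj_on h V"
    and oriented: "\<And>e. e \<in> E \<Longrightarrow> \<exists>u v. u \<in> V \<and> v \<in> V \<and> e = {u, v} \<and> h u < h v"
    and lane_crossing: "\<And>t e1 e2. e1 \<in> crossing_edges h E t \<Longrightarrow> e2 \<in> crossing_edges h E t \<Longrightarrow>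
          e1 \<noteq> e2 \<Longrightarrow> lane e1 \<noteq> lane e2"
    and passes_unique: "\<And>w e1 e2. w \<in> V \<Longrightarrow> e1 \<in> E \<Longrightarrow> e2 \<in> E \<Longrightarrow>
          passes h e1 w \<Longrightarrow> passes h e2 w \<Longrightarrow> e1 = e2"
begin

definition junction :: "'a \<Rightarrow> bool" where
  "junction v \<longleftrightarrow> (\<forall>e\<in>E. \<not> passes h e v)"

text \<open>A vertex passed over by an edge is put on the side of its block cycle opposite to the
  lane of that edge.\<close>
definition side :: "'a \<Rightarrow> bool" where
  "side v \<longleftrightarrow> \<not> lane (THE e. e \<in> E \<and> passes h e v)"

lemma side_passed:
  assumes "v \<in> V" "e \<in> E" "passes h e v"
  shows "side v \<longleftrightarrow> \<not> lane e"
proof -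
  have "(THE e. e \<in> E \<and> passes h e v) = e"
    using assms passes_unique by (intro the_equality) auto
  then show ?thesis by (simp add: side_def)
qed

lemma side_endpoint:
  assumes e: "e \<in> E" "x \<in> e" and x: "x \<in> V" "\<not> junction x"
  shows "side x \<longleftrightarrow> lane e"
proof -
  obtain e' u v where e': "e' \<in> E" "e' = {u, v}" "h u < h x" "h x < h v"
    using x(2) by (auto simp: junction_def passes_def)
  obtain y where y: "e = {x, y}" "h x < h y \<or> h y < h x"
    using oriented[OF e(1)] e(2) by (auto simp: insert_commute)
  define t where "t = (if h x < h y then h x else h x - 1)"
  have "e \<in> crossing_edges h E t"
  proof (cases "h x < h y")
    case True
    then show ?thesis using y e(1) unfolding crossing_edges_def t_def
      by (intro CollectI conjI exI[of _ x] exI[of _ y]) auto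
  next
    case False
    have "e = {y, x}" using y(1) by (simp add: insert_commute)
    then show ?thesis using False y(2) e(1) unfolding crossing_edges_def t_def
      by (intro CollectI conjI exI[of _ y] exI[of _ x]) auto
  qed
  moreover have "e' \<in> crossing_edges h E t"
    using e' unfolding crossing_edges_def t_def by (intro CollectI conjI exI[of _ u] exI[of _ v]) auto
  moreover have "e \<noteq> e'" using e' y by auto
  ultimately have "lane e \<noteq> lane e'" by (metis lane_crossing)
  then show ?thesis using side_passed[OF x(1) e'(1)] e' by (auto simp: passes_def)
qed

text \<open>Positions are even and positive, which keeps 0 and the odd numbers free for the
  extra vertices of the chain.\<close>
definition pos :: "'a \<Rightarrow> nat" where
  "pos v = 2 * h v + 2"

definition bound :: nat where
  "bound = 2 * Max (insert 0 (h ` V)) + 4"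

definition cut_positions :: "nat set" where
  "cut_positions = insert 0 (insert bound (pos ` {v \<in> V. junction v}))"

definition cuts :: "nat list" where
  "cuts = sorted_list_of_set cut_positions"

definition blocks :: nat where
  "blocks = length cuts - 1"

definition inner :: "nat \<Rightarrow> 'a set" where
  "inner k = {v \<in> V. \<not> junction v \<and> cuts ! k < pos v \<and> pos v < cuts ! Suc k}"

text \<open>A block without inner vertices gets the odd dummy vertex Suc (cuts ! k), which makes its
  cycle a triangle.\<close>
definition upper :: "nat \<Rightarrow> nat set" where
  "upper k = pos ` {v \<in> inner k. side v} \<union> (if inner k = {} then {Suc (cuts ! k)} else {})"

definition lower :: "nat \<Rightarrow> nat set" where
  "lower k = pos ` {v \<in> inner k. \<not> side v}"

definition block :: "nat \<Rightarrow> nat list" where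
  "block k = block_cycle (cuts ! k) (cuts ! Suc k) (upper k) (lower k)"

lemma pos_less_iff: "pos a < pos b \<longleftrightarrow> h a < h b"
  by (simp add: pos_def)

lemma inj_pos: "inj_on pos V"
  using inj_h by (auto simp: inj_on_def pos_def)

lemma pos_less_bound:
  assumes "v \<in> V"
  shows "pos v < bound"
proof -
  have "h v \<le> Max (insert 0 (h ` V))" using finite_V assms by simp
  then show ?thesis by (simp add: pos_def bound_def)
qed

lemma set_cuts: "set cuts = cut_positions"
proof -
  have "finite cut_positions" using finite_V by (simp add: cut_positions_def)
  then show ?thesis unfolding cuts_def by (rule set_sorted_list_of_set)
qed

lemma sorted_cuts: "sorted_wrt (<) cuts"
  by (simp add: cuts_def)

lemma pos_in_cuts_iff:
  assumes "v \<in> V"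
  shows "pos v \<in> set cuts \<longleftrightarrow> junction v"
proof
  assume "pos v \<in> set cuts"
  moreover have "pos v \<noteq> 0" "pos v \<noteq> bound" using pos_less_bound[OF assms] by (auto simp: pos_def)
  ultimately obtain w where "w \<in> V" "junction w" "pos v = pos w"
    by (auto simp: set_cuts cut_positions_def)
  then show "junction v" using inj_onD[OF inj_pos] assms by metis
qed (use assms in \<open>simp add: set_cuts cut_positions_def\<close>)

lemma cuts_le_bound: "x \<in> set cuts \<Longrightarrow> x \<le> bound"
  using pos_less_bound by (auto simp: set_cuts cut_positions_def less_imp_le)

lemma blocks_pos: "0 < blocks"
proof -
  have "card {0, bound} \<le> card (set cuts)"
    using finite_V by (intro card_mono) (auto simp: set_cuts cut_positions_def)
  also have "\<dots> = length cuts"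
    using sorted_cuts by (simp add: strict_sorted_iff distinct_card)
  finally show ?thesis by (simp add: blocks_def bound_def)
qed

lemma cuts_first: "cuts ! 0 = 0"
proof -
  have "0 \<in> set cuts" by (simp add: set_cuts cut_positions_def)
  then obtain i where "i < length cuts" "cuts ! i = 0" by (auto simp: in_set_conv_nth)
  then show ?thesis using sorted_nth_mono[OF strict_sorted_imp_sorted[OF sorted_cuts], of 0 i] by simp
qed

lemma cuts_last: "cuts ! blocks = bound"
proof -
  have "blocks < length cuts" using blocks_pos by (simp add: blocks_def)
  moreover have "bound \<in> set cuts" by (simp add: set_cuts cut_positions_def)
  then obtain i where "i < length cuts" "cuts ! i = bound" by (auto simp: in_set_conv_nth)
  ultimately show ?thesis
    using sorted_nth_mono[OF strict_sorted_imp_sorted[OF sorted_cuts], of i blocks]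
      cuts_le_bound[OF nth_mem] by (fastforce simp: blocks_def)
qed

lemma cuts_step: "k < blocks \<Longrightarrow> cuts ! k < cuts ! Suc k"
  using sorted_cuts by (simp add: blocks_def sorted_wrt_iff_nth_less)

lemma cut_not_between: "k < blocks \<Longrightarrow> x \<in> set cuts \<Longrightarrow> x \<le> cuts ! k \<or> cuts ! Suc k \<le> x"
  using sorted_wrt_less_not_between[OF sorted_cuts] by (simp add: blocks_def)

lemma exists_block: "w < bound \<Longrightarrow> \<exists>k<blocks. cuts ! k \<le> w \<and> w < cuts ! Suc k"
  using step_between[of "(!) cuts" w blocks] cuts_first cuts_last by simp

lemma pos_cases:
  assumes "v \<in> V" "k < blocks" "cuts ! k \<le> pos v" "pos v \<le> cuts ! Suc k"
  shows "pos v = cuts ! k \<or> pos v = cuts ! Suc k \<or> v \<in> inner k"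
proof (cases "junction v")
  case True
  then show ?thesis using cut_not_between[OF assms(2)] pos_in_cuts_iff[OF assms(1)] assms(3,4)
    by fastforce
qed (use assms in \<open>auto simp: inner_def\<close>)

lemma even_cuts: "x \<in> set cuts \<Longrightarrow> even x"
  by (auto simp: set_cuts cut_positions_def pos_def bound_def)

lemma block_sides:
  assumes k: "k < blocks"
  shows "finite (upper k)" "finite (lower k)" "upper k \<union> lower k \<noteq> {}"
    "upper k \<inter> lower k = {}" "upper k \<union> lower k \<subseteq> {cuts ! k<..<cuts ! Suc k}"
proof -
  have cuts_in: "cuts ! k \<in> set cuts" "cuts ! Suc k \<in> set cuts" using k by (simp_all add: blocks_def)
  then have "Suc (cuts ! k) < cuts ! Suc k"
    using cuts_step[OF k] even_cuts by (metis Suc_lessI even_Suc)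
  moreover have "\<not> even (Suc (cuts ! k))" using even_cuts[OF cuts_in(1)] by simp
  moreover have "pos ` {v \<in> inner k. side v} \<inter> pos ` {v \<in> inner k. \<not> side v} = {}"
    using inj_on_image_Int[OF inj_pos, of "{v \<in> inner k. side v}" "{v \<in> inner k. \<not> side v}"]
    by (auto simp: inner_def)
  ultimately show "upper k \<inter> lower k = {}" "upper k \<union> lower k \<subseteq> {cuts ! k<..<cuts ! Suc k}"
    by (auto simp: upper_def lower_def inner_def pos_def)
  show "finite (upper k)" "finite (lower k)" using finite_V by (simp_all add: upper_def lower_def inner_def)
  show "upper k \<union> lower k \<noteq> {}" by (auto simp: upper_def lower_def)
qed

lemma set_block: "k < blocks \<Longrightarrow> set (block k) = {cuts ! k, cuts ! Suc k} \<union> upper k \<union> lower k"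
  using block_sides by (simp add: block_def set_block_cycle)

lemma chain_of_blocks: "chain_of_cycles (\<Union>k<blocks. set (block k)) (\<Union>k<blocks. cycle_edges (block k))"
proof (rule chain_of_cycles_intervals[where c = "(!) cuts"])
  fix k assume k: "k < blocks"
  show "is_cycle (set (block k)) (cycle_edges (block k))"
    unfolding block_def using block_sides[OF k] by (rule is_cycle_block_cycle)
  show "cuts ! k \<in> set (block k) \<and> cuts ! Suc k \<in> set (block k)" using set_block[OF k] by simp
  show "set (block k) \<subseteq> {cuts ! k..cuts ! Suc k}"
    using set_block[OF k] block_sides(5)[OF k] cuts_step[OF k] by auto
qed (use blocks_pos cuts_step in auto)

lemma pos_in_block:
  assumes v: "v \<in> V"
  shows "\<exists>k<blocks. pos v \<in> set (block k)"
proof -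
  obtain k where k: "k < blocks" "cuts ! k \<le> pos v" "pos v < cuts ! Suc k"
    using exists_block pos_less_bound[OF v] by blast
  then have "pos v = cuts ! k \<or> v \<in> inner k" using pos_cases[OF v k(1,2)] by auto
  then have "pos v \<in> set (block k)"
    using set_block[OF k(1)] by (cases "side v") (auto simp: upper_def lower_def)
  then show ?thesis using k(1) by blast
qed

lemma edge_within_block:
  assumes e: "e \<in> E" "e = {x, y}" and xy: "x \<in> V" "y \<in> V" "h x < h y"
  shows "\<exists>k<blocks. cuts ! k \<le> pos x \<and> pos y \<le> cuts ! Suc k"
proof -
  obtain k where k: "k < blocks" "cuts ! k \<le> pos x" "pos x < cuts ! Suc k"
    using exists_block pos_less_bound[OF xy(1)] by blast
  have "pos y \<le> cuts ! Suc k"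
  proof (rule ccontr)
    assume "\<not> pos y \<le> cuts ! Suc k"
    moreover have "cuts ! Suc k \<in> cut_positions"
      using nth_mem[of "Suc k" cuts] k(1) set_cuts by (simp add: blocks_def)
    moreover have "pos y < bound" using pos_less_bound[OF xy(2)] .
    ultimately obtain v where v: "v \<in> V" "junction v" "cuts ! Suc k = pos v"
      using k(3) by (auto simp: cut_positions_def)
    then have "passes h e v" using e k(3) \<open>\<not> pos y \<le> cuts ! Suc k\<close> unfolding passes_def
      by (intro exI[of _ x] exI[of _ y]) (auto simp: pos_def)
    then show False using v e by (auto simp: junction_def)
  qed
  then show ?thesis using k by blast
qed

lemma endpoint_on_lane_side:
  assumes "e \<in> E" "v \<in> e" "v \<in> V" "k < blocks" "cuts ! k \<le> pos v" "pos v \<le> cuts ! Suc k"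
  shows "pos v \<in> {cuts ! k, cuts ! Suc k} \<union> pos ` {w \<in> inner k. side w = lane e}"
proof -
  have "side v \<longleftrightarrow> lane e" if "v \<in> inner k"
    using that side_endpoint[OF assms(1-3)] by (simp add: inner_def)
  then show ?thesis using pos_cases[OF assms(3-6)] by auto
qed

lemma lane_side_gap:
  assumes "e \<in> E" "e = {x, y}" "w \<in> V" "pos x < pos w" "pos w < pos y"
  shows "side w \<longleftrightarrow> \<not> lane e"
proof -
  have "passes h e w" unfolding passes_def using assms(2,4,5)
    by (intro exI[of _ x] exI[of _ y]) (simp add: pos_less_iff)
  then show ?thesis using side_passed[OF assms(3,1)] by simp
qed

lemma edge_in_block:
  assumes e: "e \<in> E"
  shows "\<exists>k<blocks. pos ` e \<in> cycle_edges (block k)"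
proof -
  obtain x y where xy: "x \<in> V" "y \<in> V" "e = {x, y}" "h x < h y" using oriented[OF e] by blast
  obtain k where k: "k < blocks" "cuts ! k \<le> pos x" "pos y \<le> cuts ! Suc k"
    using edge_within_block[OF e xy(3) xy(1,2,4)] by blast
  have pq: "pos x < pos y" using xy(4) by (simp add: pos_less_iff)
  define S where "S = pos ` {w \<in> inner k. side w = lane e}"
  have "pos x \<le> cuts ! Suc k" "cuts ! k \<le> pos y" using pq k by auto
  then have ends: "pos x \<in> {cuts ! k, cuts ! Suc k} \<union> S" "pos y \<in> {cuts ! k, cuts ! Suc k} \<union> S"
    using endpoint_on_lane_side[OF e _ xy(1) k(1,2)] endpoint_on_lane_side[OF e _ xy(2) k(1) _ k(3)]
      xy(3) unfolding S_def by auto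
  have gap: "\<forall>s\<in>S. \<not> (pos x < s \<and> s < pos y)"
    using lane_side_gap[OF e xy(3)] by (auto simp: S_def inner_def)
  have S: "finite S" "S \<subseteq> {cuts ! k<..<cuts ! Suc k}"
    using finite_V by (auto simp: S_def inner_def)
  have "{pos x, pos y} \<in> cycle_edges (block k)"
  proof (cases "lane e \<and> inner k \<noteq> {}")
    case True
    then have "upper k = S" by (auto simp: upper_def S_def)
    then show ?thesis
      using block_cycle_edge_upper[OF S cuts_step[OF k(1)] ends pq gap] by (simp add: block_def)
  next
    case False
    then have "lower k = S" by (auto simp: lower_def S_def)
    then show ?thesis
      using block_cycle_edge_lower[OF S cuts_step[OF k(1)] ends pq gap] by (simp add: block_def)
  qed
  then show ?thesis using xy(3) k(1) by auto
qed

lemma embeds_into_chain_of_cycles: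
  "\<exists>(W :: nat set) F. chain_of_cycles W F \<and> iso_to_subgraph V E W F"
proof -
  have "iso_to_subgraph V E (\<Union>k<blocks. set (block k)) (\<Union>k<blocks. cycle_edges (block k))"
    unfolding iso_to_subgraph_def using inj_pos pos_in_block edge_in_block by blast
  then show ?thesis using chain_of_blocks by blast
qed

end

lemma simple_graph_oriented:
  fixes h :: "'a \<Rightarrow> 'b::linorder"
  assumes "simple_graph V E" "inj_on h V" "e \<in> E"
  shows "\<exists>u v. u \<in> V \<and> v \<in> V \<and> e = {u, v} \<and> h u < h v"
proof -
  have "card e = 2" "e \<subseteq> V" using assms by (auto simp: simple_graph_def)
  then obtain u v where uv: "e = {u, v}" "u \<noteq> v" "u \<in> V" "v \<in> V" by (auto simp: card_2_iff)
  then have "h u \<noteq> h v" using assms(2) by (auto dest: inj_onD)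
  then consider "h u < h v" | "h v < h u" using neq_iff by blast
  then show ?thesis
  proof cases
    case 2
    moreover have "e = {v, u}" using uv(1) by (simp add: insert_commute)
    ultimately show ?thesis using uv by blast
  qed (use uv in blast)
qed

lemma chain_embedding_if_width2_layout:
  assumes sg: "simple_graph V E" and f: "width2_layout f V E"
  shows "\<exists>(W :: nat set) F. chain_of_cycles W F \<and> iso_to_subgraph V E W F"
proof -
  have fin: "finite V" and edges: "\<forall>e\<in>E. e \<subseteq> V \<and> card e = 2"
    using sg by (auto simp: simple_graph_def)
  obtain h where h: "width2_layout h V E"
    and passed: "\<And>w e. w \<in> V \<Longrightarrow> e \<in> E \<Longrightarrow> passes h e w \<Longrightarrow> \<exists>e0\<in>E. w \<in> e0"
    using width2_layout_isolated_last[OF f fin] edges by blast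
  have oriented: "\<exists>u v. u \<in> V \<and> v \<in> V \<and> e = {u, v} \<and> h u < h v" if "e \<in> E" for e
    using simple_graph_oriented[OF sg _ that] h unfolding width2_layout_def by blast
  have finE: "finite E" and width: "\<forall>t. card (crossing_edges h E t) \<le> 2"
    using h by (auto simp: width2_layout_def)
  have "\<forall>e\<in>E. \<exists>u v. e = {u, v} \<and> h u < h v" using oriented by blast
  then obtain lane :: "'a set \<Rightarrow> bool" where lane: "\<forall>t. \<forall>e1\<in>crossing_edges h E t.
      \<forall>e2\<in>crossing_edges h E t. e1 \<noteq> e2 \<longrightarrow> lane e1 \<noteq> lane e2"
    using crossing_edges_two_colouring[OF finE _ width] by blast
  interpret lane_layout V E h lane
  proof
    show "finite V" by (fact fin)
    show "inj_on h V" using h by (simp add: width2_layout_def)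
    show "\<exists>u v. u \<in> V \<and> v \<in> V \<and> e = {u, v} \<and> h u < h v" if "e \<in> E" for e
      using oriented[OF that] .
    show "lane e1 \<noteq> lane e2"
      if "e1 \<in> crossing_edges h E t" "e2 \<in> crossing_edges h E t" "e1 \<noteq> e2" for t e1 e2
      using lane that by blast
    show "e1 = e2" if "w \<in> V" "e1 \<in> E" "e2 \<in> E" "passes h e1 w" "passes h e2 w" for w e1 e2
      using passed[OF that(1,2,4)] passing_edge_unique[OF h edges _ _ that(2-5)] by blast
  qed
  show ?thesis by (rule embeds_into_chain_of_cycles)
qed

theorem mainTheorem1:
  fixes V :: "'a set" and E :: "'a set set"
  assumes "simple_graph V E"
  shows "cutwidth_at_most_2 V E \<longleftrightarrow>
    (\<exists>(W :: nat set) F. chain_of_cycles W F \<and> iso_to_subgraph V E W F)"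
proof -
  have fin: "finite V" and sub: "\<forall>e\<in>E. e \<subseteq> V" using assms by (auto simp: simple_graph_def)
  have "cutwidth_at_most_2 V E \<longleftrightarrow> (\<exists>h. width2_layout h V E)"
    using fin sub by (rule cutwidth_at_most_2_iff_width2_layout)
  also have "\<dots> \<longleftrightarrow> (\<exists>(W :: nat set) F. chain_of_cycles W F \<and> iso_to_subgraph V E W F)"
  proof
    assume "\<exists>h. width2_layout h V E"
    then show "\<exists>(W :: nat set) F. chain_of_cycles W F \<and> iso_to_subgraph V E W F"
      using chain_embedding_if_width2_layout[OF assms] by blast
  next
    assume "\<exists>(W :: nat set) F. chain_of_cycles W F \<and> iso_to_subgraph V E W F"
    then obtain W :: "nat set" and F where "chain_of_cycles W F" "iso_to_subgraph V E W F" by blast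
    then show "\<exists>h. width2_layout h V E"
      using width2_layout_chain_of_cycles width2_layout_pullback fin sub by blast
  qed
  finally show ?thesis .
qed

end
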